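(* Let $\Gamma$ be a layered graph with unique minimal vertex $*$. The following are equivalent: (i) $\Gamma$ is uniform. (ii) For any vertices $v,x,x'$ with $v\gtrdot x$ and $v\gtrdot x'$, there exist vertices $x_0,\dots,x_s$ and $y_1,\dots,y_s$ such that $x_0=x$, $x_s=x'$, $v\gtrdot x_i$ for all $0\le i\le s$, and $x_{i-1}\gtrdot y_i$ and $x_i\gtrdot y_i$ for all $1\le i\le s$. (iii) For any two vertex paths $(v_1,\dots,v_n)$ and $(w_1,\dots,w_n)$ with $v_1=w_1$ and $v_n=w_n=*$, there is a sequence of vertex paths $\pi_1,\dots,\pi_k$, each starting at $v_1$ and ending at $*$, with $\pi_1=(v_1,\dots,v_n)$, $\pi_k=(w_1,\dots,w_n)$, such that for $1\le i<k$ the paths $\pi_i$ and $\pi_{i+1}$ differ in at most one vertex.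
   Context: A layered graph is a finite directed graph $\Gamma=(V,E)$ with $V=\bigsqcup_{i=0}^{N}V_i$ such that every edge from $V_i$ goes to $V_{i-1}$; $V_{\ge k}=\bigsqcup_{i\ge k}V_i$, $S(v)=\{w:(v,w)\in E\}$, we write $v\gtrdot w$ for $(v,w)\in E$, every vertex outside $V_0$ has $S(v)\ne\emptyset$, and $V_0=\{*\}$. A vertex path is a sequence $(v_1,\dots,v_n)$ with $v_i\gtrdot v_{i+1}$. For $v\in V$, let $\sim_v$ be the equivalence relation on $S(v)$ that is the transitive closure of the relation $w\approx_v u$ iff $S(w)\cap S(u)\ne\emptyset$ (together with reflexivity). $\Gamma$ is uniform if for every $v\in V_{\ge2}$ all elements of $S(v)$ are $\sim_v$-equivalent. *)

theory Defs
  imports Main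
begin

text \<open>A layered graph: finite vertex set V, edge set E, layer function lvl
  (v \<in> V_i iff lvl v = i), and unique minimal vertex star (V_0 = {star}).\<close>
definition layered_graph :: "'a set \<Rightarrow> ('a \<times> 'a) set \<Rightarrow> ('a \<Rightarrow> nat) \<Rightarrow> 'a \<Rightarrow> bool" where
  "layered_graph V E lvl star \<longleftrightarrow>
     finite V \<and> E \<subseteq> V \<times> V \<and>
     (\<forall>(v, w) \<in> E. lvl v = Suc (lvl w)) \<and>
     (\<forall>v \<in> V. lvl v \<noteq> 0 \<longrightarrow> (\<exists>w. (v, w) \<in> E)) \<and>
     {v \<in> V. lvl v = 0} = {star}"

definition succs :: "('a \<times> 'a) set \<Rightarrow> 'a \<Rightarrow> 'a set" where
  "succs E v = {w. (v, w) \<in> E}"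

definition approx_rel :: "('a \<times> 'a) set \<Rightarrow> 'a \<Rightarrow> ('a \<times> 'a) set" where
  "approx_rel E v = {(w, u). w \<in> succs E v \<and> u \<in> succs E v \<and> succs E w \<inter> succs E u \<noteq> {}}"

definition sim_rel :: "('a \<times> 'a) set \<Rightarrow> 'a \<Rightarrow> 'a \<Rightarrow> 'a \<Rightarrow> bool" where
  "sim_rel E v w u \<longleftrightarrow> w \<in> succs E v \<and> u \<in> succs E v \<and> (w, u) \<in> (approx_rel E v)\<^sup>*"

definition uniform :: "'a set \<Rightarrow> ('a \<times> 'a) set \<Rightarrow> ('a \<Rightarrow> nat) \<Rightarrow> bool" where
  "uniform V E lvl \<longleftrightarrow>
     (\<forall>v \<in> V. lvl v \<ge> 2 \<longrightarrow> (\<forall>w \<in> succs E v. \<forall>u \<in> succs E v. sim_rel E v w u))"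

definition vertex_path :: "'a set \<Rightarrow> ('a \<times> 'a) set \<Rightarrow> 'a list \<Rightarrow> bool" where
  "vertex_path V E p \<longleftrightarrow> p \<noteq> [] \<and> set p \<subseteq> V \<and>
     (\<forall>i. Suc i < length p \<longrightarrow> (p ! i, p ! Suc i) \<in> E)"

definition differ_at_most_one :: "'a list \<Rightarrow> 'a list \<Rightarrow> bool" where
  "differ_at_most_one p q \<longleftrightarrow> length p = length q \<and>
     card {j. j < length p \<and> p ! j \<noteq> q ! j} \<le> 1"

end

theory Submission
  imports Defs
begin

text \<open>Below level 2 every successor is the sink, so uniformity says that for every vertex v the
  successors of v are connected under the relation ``have a common successor''; condition (ii)
  spells out the connecting chains. For (iii), call two paths to the sink with the same start a
  flip if they differ in one vertex. A flip changing the second vertex of v x r into x' keeps the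
  third vertex, which is a common successor of x and x' (or x = x' is the sink). Hence flips
  between paths from v only move the second vertex within its class, giving uniformity.
  Conversely, induct on the level of v: paths through the same second vertex are connected by
  flips in their tails, and a link x, x' with common successor y of a chain of second vertices is
  crossed by the single flip from v x y ... to v x' y ...\<close>

lemma rtrancl_iff_successively:
  "(x, y) \<in> R\<^sup>* \<longleftrightarrow>
     (\<exists>xs. xs \<noteq> [] \<and> hd xs = x \<and> last xs = y \<and> successively (\<lambda>a b. (a, b) \<in> R) xs)"
proof
  assume "(x, y) \<in> R\<^sup>*"
  then show "\<exists>xs. xs \<noteq> [] \<and> hd xs = x \<and> last xs = y \<and> successively (\<lambda>a b. (a, b) \<in> R) xs"
  proof (induction rule: converse_rtrancl_induct)
    case base
    show ?case by (intro exI[of _ "[y]"]) simp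
  next
    case (step x z)
    then obtain xs where "xs \<noteq> []" "hd xs = z" "last xs = y" "successively (\<lambda>a b. (a, b) \<in> R) xs"
      by blast
    with step.hyps(1) show ?case by (intro exI[of _ "x # xs"]) (simp add: successively_Cons)
  qed
next
  assume "\<exists>xs. xs \<noteq> [] \<and> hd xs = x \<and> last xs = y \<and> successively (\<lambda>a b. (a, b) \<in> R) xs"
  then obtain xs where "xs \<noteq> []" "hd xs = x" "last xs = y" "successively (\<lambda>a b. (a, b) \<in> R) xs"
    by blast
  then show "(x, y) \<in> R\<^sup>*"
  proof (induction xs arbitrary: x)
    case (Cons a xs)
    then show ?case
      by (cases "xs = []") (auto simp: successively_Cons intro: converse_rtrancl_into_rtrancl)
  qed simp
qed

lemma successively_invariant:
  assumes "successively P xs" "Q (hd xs)" "\<And>a b. P a b \<Longrightarrow> Q a \<Longrightarrow> Q b"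
  shows "\<forall>x \<in> set xs. Q x"
  using assms(1,2)
proof (induction xs)
  case (Cons a xs)
  show ?case
  proof (cases "xs = []")
    case False
    with Cons.prems have "P a (hd xs)" "successively P xs" by (simp_all add: successively_Cons)
    moreover from this(1) Cons.prems(2) have "Q (hd xs)" using assms(3) by simp
    ultimately show ?thesis using Cons by simp
  qed (use Cons.prems in simp)
qed simp

lemma differ_at_most_one_iff:
  "differ_at_most_one p q \<longleftrightarrow> length p = length q \<and> (\<exists>k. \<forall>j < length p. j \<noteq> k \<longrightarrow> p ! j = q ! j)"
proof -
  let ?D = "{j. j < length p \<and> p ! j \<noteq> q ! j}"
  have "card ?D \<le> 1 \<longleftrightarrow> (\<exists>k. ?D \<subseteq> {k})"
  proof
    assume "card ?D \<le> 1"
    then have "\<forall>a \<in> ?D. \<forall>b \<in> ?D. a = b"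
      using card_le_Suc0_iff_eq[of ?D] by simp
    then show "\<exists>k. ?D \<subseteq> {k}" by blast
  next
    assume "\<exists>k. ?D \<subseteq> {k}"
    then show "card ?D \<le> 1"
      using card_mono[of "{_}" ?D] by fastforce
  qed
  then show ?thesis unfolding differ_at_most_one_def by blast
qed

lemma differ_at_most_one_Cons: "differ_at_most_one p q \<Longrightarrow> differ_at_most_one (v # p) (v # q)"
  unfolding differ_at_most_one_iff
  by (metis (no_types, lifting) length_Cons less_Suc_eq_0_disj nth_Cons_0 nth_Cons_Suc)

lemma differ_at_most_one_second: "differ_at_most_one (v # x # r) (v # y # r)"
  unfolding differ_at_most_one_iff
  by (metis length_Cons less_Suc_eq_0_disj nth_Cons_0 nth_Cons_Suc)

lemma vertex_path_Cons:
  "p \<noteq> [] \<Longrightarrow> vertex_path V E (v # p) \<longleftrightarrow> v \<in> V \<and> (v, hd p) \<in> E \<and> vertex_path V E p"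
  by (auto simp: vertex_path_def nth_Cons hd_conv_nth split: nat.splits)

lemma layered_graphD:
  assumes "layered_graph V E lvl star"
  shows "lvl star = 0"
    "\<And>v. v \<in> V \<Longrightarrow> lvl v = 0 \<Longrightarrow> v = star"
    "\<And>v w. (v, w) \<in> E \<Longrightarrow> lvl v = Suc (lvl w)"
    "\<And>v w. (v, w) \<in> E \<Longrightarrow> v \<in> V \<and> w \<in> V"
    "\<And>v. v \<in> V \<Longrightarrow> lvl v \<noteq> 0 \<Longrightarrow> \<exists>w. (v, w) \<in> E"
  using assms unfolding layered_graph_def by auto

definition star_path :: "'a set \<Rightarrow> ('a \<times> 'a) set \<Rightarrow> 'a \<Rightarrow> 'a list \<Rightarrow> bool" where
  "star_path V E star p \<longleftrightarrow> vertex_path V E p \<and> last p = star"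

lemma star_path_nonempty: "star_path V E star p \<Longrightarrow> p \<noteq> []"
  by (simp add: star_path_def vertex_path_def)

lemma star_path_Cons:
  "p \<noteq> [] \<Longrightarrow> star_path V E star (v # p) \<longleftrightarrow> v \<in> V \<and> (v, hd p) \<in> E \<and> star_path V E star p"
  by (auto simp: star_path_def vertex_path_Cons)

lemma star_path_hd_in: "star_path V E star p \<Longrightarrow> hd p \<in> V"
  by (auto simp: star_path_def vertex_path_def)

lemma star_path_length:
  assumes "layered_graph V E lvl star" "star_path V E star p"
  shows "length p = Suc (lvl (hd p))"
  using assms(2)
proof (induction p)
  case Nil
  then show ?case by (simp add: star_path_def vertex_path_def)
next
  case (Cons v p)
  show ?case
  proof (cases "p = []")
    case True
    then show ?thesis using Cons.prems layered_graphD(1)[OF assms(1)] by (simp add: star_path_def)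
  next
    case False
    with Cons.prems have e: "(v, hd p) \<in> E" and "star_path V E star p" by (simp_all add: star_path_Cons)
    with Cons.IH show ?thesis using layered_graphD(3)[OF assms(1) e] by simp
  qed
qed

lemma star_path_exists:
  assumes "layered_graph V E lvl star" "v \<in> V"
  obtains p where "star_path V E star p" "hd p = v"
proof -
  have "\<exists>p. star_path V E star p \<and> hd p = v" if "v \<in> V" "lvl v = n" for v n
    using that
  proof (induction n arbitrary: v)
    case 0
    then have "v = star" using layered_graphD(2)[OF assms(1), of v] by simp
    with 0 show ?case by (intro exI[of _ "[v]"]) (simp add: star_path_def vertex_path_def)
  next
    case (Suc n)
    obtain w where w: "(v, w) \<in> E" using layered_graphD(5)[OF assms(1) Suc.prems(1)] Suc.prems(2) by auto
    have "w \<in> V" "lvl w = n"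
      using Suc.prems layered_graphD(3)[OF assms(1) w] layered_graphD(4)[OF assms(1) w] by auto
    then obtain p where p: "star_path V E star p" "hd p = w" using Suc.IH by blast
    have "p \<noteq> []" using p(1) by (rule star_path_nonempty)
    with w p Suc.prems show ?case
      by (intro exI[of _ "v # p"]) (simp add: star_path_Cons)
  qed
  from this[OF assms(2) refl] obtain p where "star_path V E star p" "hd p = v" by blast
  then show ?thesis by (rule that)
qed

definition succs_connected :: "('a \<times> 'a) set \<Rightarrow> bool" where
  "succs_connected E \<longleftrightarrow> (\<forall>v x x'. (v, x) \<in> E \<longrightarrow> (v, x') \<in> E \<longrightarrow> (x, x') \<in> (approx_rel E v)\<^sup>*)"

lemma approx_rel_iff:
  "(x, x') \<in> approx_rel E v \<longleftrightarrow> (v, x) \<in> E \<and> (v, x') \<in> E \<and> (\<exists>y. (x, y) \<in> E \<and> (x', y) \<in> E)"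
  by (auto simp: approx_rel_def succs_def)

lemma uniform_iff_succs_connected:
  assumes "layered_graph V E lvl star"
  shows "uniform V E lvl \<longleftrightarrow> succs_connected E"
proof
  assume uniform: "uniform V E lvl"
  show "succs_connected E"
    unfolding succs_connected_def
  proof (intro allI impI)
    fix v x x' assume x: "(v, x) \<in> E" and x': "(v, x') \<in> E"
    have "lvl v = Suc (lvl x)" "lvl v = Suc (lvl x')"
      using layered_graphD(3)[OF assms x] layered_graphD(3)[OF assms x'] by auto
    show "(x, x') \<in> (approx_rel E v)\<^sup>*"
    proof (cases "lvl v \<ge> 2")
      case True
      have "v \<in> V" using layered_graphD(4)[OF assms x] by simp
      with True uniform have "\<forall>w \<in> succs E v. \<forall>u \<in> succs E v. sim_rel E v w u"
        unfolding uniform_def by simp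
      with x x' show ?thesis by (simp add: sim_rel_def succs_def)
    next
      case False
      with \<open>lvl v = Suc (lvl x)\<close> \<open>lvl v = Suc (lvl x')\<close> have "lvl x = 0" "lvl x' = 0" by auto
      then have "x = star" "x' = star"
        using layered_graphD(2)[OF assms, of x] layered_graphD(2)[OF assms, of x']
          layered_graphD(4)[OF assms x] layered_graphD(4)[OF assms x'] by auto
      then show ?thesis by simp
    qed
  qed
next
  assume "succs_connected E"
  then show "uniform V E lvl"
    unfolding uniform_def sim_rel_def succs_connected_def succs_def by simp
qed

lemma approx_rtrancl_iff_zigzag:
  assumes "(v, x) \<in> E"
  shows "(x, x') \<in> (approx_rel E v)\<^sup>* \<longleftrightarrow>
    (\<exists>(s::nat) xs ys. xs 0 = x \<and> xs s = x' \<and> (\<forall>i \<le> s. (v, xs i) \<in> E) \<and>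
       (\<forall>i \<in> {1..s}. (xs (i - 1), ys i) \<in> E \<and> (xs i, ys i) \<in> E))"
  (is "_ \<longleftrightarrow> ?zigzag")
proof
  assume "(x, x') \<in> (approx_rel E v)\<^sup>*"
  then obtain s xs where xs: "xs 0 = x" "xs s = x'"
    and step: "\<forall>i < s. (xs i, xs (Suc i)) \<in> approx_rel E v"
    unfolding rtrancl_power relpow_fun_conv by blast
  then have "\<forall>i < s. \<exists>y. (xs i, y) \<in> E \<and> (xs (Suc i), y) \<in> E"
    by (auto simp: approx_rel_iff)
  then obtain ys where ys: "\<forall>i < s. (xs i, ys i) \<in> E \<and> (xs (Suc i), ys i) \<in> E"
    by metis
  have "\<forall>i \<le> s. (v, xs i) \<in> E"
  proof (intro allI impI)
    fix i assume "i \<le> s"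
    show "(v, xs i) \<in> E"
    proof (cases "i < s")
      case True
      with step show ?thesis by (auto simp: approx_rel_iff)
    next
      case False
      with \<open>i \<le> s\<close> step xs(1) assms show ?thesis
        by (cases s) (auto simp: approx_rel_iff)
    qed
  qed
  moreover define zs where "zs i = ys (i - 1)" for i
  moreover have "\<forall>i \<in> {1..s}. (xs (i - 1), zs i) \<in> E \<and> (xs i, zs i) \<in> E"
  proof
    fix i assume "i \<in> {1..s}"
    then have "i - 1 < s" "Suc (i - 1) = i" by auto
    then show "(xs (i - 1), zs i) \<in> E \<and> (xs i, zs i) \<in> E"
      using ys[rule_format, of "i - 1"] unfolding zs_def by simp
  qed
  ultimately show ?zigzag using xs by blast
next
  assume ?zigzag
  then obtain s :: nat and xs ys where xs: "xs 0 = x" "xs s = x'" "\<forall>i \<le> s. (v, xs i) \<in> E"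
    and ys: "\<forall>i \<in> {1..s}. (xs (i - 1), ys i) \<in> E \<and> (xs i, ys i) \<in> E"
    by blast
  have "(xs i, xs (Suc i)) \<in> approx_rel E v" if "i < s" for i
    using that xs(3) ys[rule_format, of "Suc i"] by (auto simp: approx_rel_iff)
  with xs show "(x, x') \<in> (approx_rel E v)\<^sup>*"
    unfolding rtrancl_power relpow_fun_conv by blast
qed

lemma succs_connected_iff_zigzag:
  "succs_connected E \<longleftrightarrow>
    (\<forall>v x x'. (v, x) \<in> E \<and> (v, x') \<in> E \<longrightarrow>
      (\<exists>(s::nat) xs ys. xs 0 = x \<and> xs s = x' \<and> (\<forall>i \<le> s. (v, xs i) \<in> E) \<and>
         (\<forall>i \<in> {1..s}. (xs (i - 1), ys i) \<in> E \<and> (xs i, ys i) \<in> E)))"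
  (is "_ \<longleftrightarrow> (\<forall>v x x'. ?edges v x x' \<longrightarrow> ?zigzag v x x')")
  unfolding succs_connected_def
proof (intro iff_allI)
  fix v x x'
  show "((v, x) \<in> E \<longrightarrow> (v, x') \<in> E \<longrightarrow> (x, x') \<in> (approx_rel E v)\<^sup>*) \<longleftrightarrow>
    (?edges v x x' \<longrightarrow> ?zigzag v x x')"
    by (cases "(v, x) \<in> E") (simp_all add: approx_rtrancl_iff_zigzag)
qed

definition path_flip :: "'a set \<Rightarrow> ('a \<times> 'a) set \<Rightarrow> 'a \<Rightarrow> ('a list \<times> 'a list) set" where
  "path_flip V E star =
     {(p, q). star_path V E star p \<and> star_path V E star q \<and> hd p = hd q \<and> differ_at_most_one p q}"

lemma successively_path_flip_iff:
  assumes "star_path V E star (hd \<pi>s)"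
  shows "successively (\<lambda>a b. (a, b) \<in> path_flip V E star) \<pi>s \<longleftrightarrow>
    (\<forall>\<pi> \<in> set \<pi>s. vertex_path V E \<pi> \<and> hd \<pi> = hd (hd \<pi>s) \<and> last \<pi> = star) \<and>
    (\<forall>i. Suc i < length \<pi>s \<longrightarrow> differ_at_most_one (\<pi>s ! i) (\<pi>s ! Suc i))"
proof
  assume chain: "successively (\<lambda>a b. (a, b) \<in> path_flip V E star) \<pi>s"
  have "\<forall>\<pi> \<in> set \<pi>s. star_path V E star \<pi> \<and> hd \<pi> = hd (hd \<pi>s)"
  proof (rule successively_invariant[OF chain])
    show "star_path V E star (hd \<pi>s) \<and> hd (hd \<pi>s) = hd (hd \<pi>s)" using assms by simp
  next
    fix a b assume "(a, b) \<in> path_flip V E star" "star_path V E star a \<and> hd a = hd (hd \<pi>s)"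
    then show "star_path V E star b \<and> hd b = hd (hd \<pi>s)" by (simp add: path_flip_def)
  qed
  moreover have "\<forall>i. Suc i < length \<pi>s \<longrightarrow> differ_at_most_one (\<pi>s ! i) (\<pi>s ! Suc i)"
    using chain by (auto simp: successively_conv_nth path_flip_def)
  ultimately show "(\<forall>\<pi> \<in> set \<pi>s. vertex_path V E \<pi> \<and> hd \<pi> = hd (hd \<pi>s) \<and> last \<pi> = star) \<and>
    (\<forall>i. Suc i < length \<pi>s \<longrightarrow> differ_at_most_one (\<pi>s ! i) (\<pi>s ! Suc i))"
    by (simp add: star_path_def)
next
  assume paths: "(\<forall>\<pi> \<in> set \<pi>s. vertex_path V E \<pi> \<and> hd \<pi> = hd (hd \<pi>s) \<and> last \<pi> = star) \<and>
    (\<forall>i. Suc i < length \<pi>s \<longrightarrow> differ_at_most_one (\<pi>s ! i) (\<pi>s ! Suc i))"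
  show "successively (\<lambda>a b. (a, b) \<in> path_flip V E star) \<pi>s"
    unfolding successively_conv_nth
  proof (intro allI impI)
    fix i assume "Suc i < length \<pi>s"
    then have "\<pi>s ! i \<in> set \<pi>s" "\<pi>s ! Suc i \<in> set \<pi>s" by simp_all
    with \<open>Suc i < length \<pi>s\<close> paths show "(\<pi>s ! i, \<pi>s ! Suc i) \<in> path_flip V E star"
      by (simp add: path_flip_def star_path_def)
  qed
qed

lemma path_flip_rtrancl_iff_chain:
  assumes "star_path V E star p"
  shows "(p, q) \<in> (path_flip V E star)\<^sup>* \<longleftrightarrow>
    (\<exists>\<pi>s. \<pi>s \<noteq> [] \<and> hd \<pi>s = p \<and> last \<pi>s = q \<and>
       (\<forall>\<pi> \<in> set \<pi>s. vertex_path V E \<pi> \<and> hd \<pi> = hd p \<and> last \<pi> = star) \<and>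
       (\<forall>i. Suc i < length \<pi>s \<longrightarrow> differ_at_most_one (\<pi>s ! i) (\<pi>s ! Suc i)))"
  unfolding rtrancl_iff_successively
proof (rule ex_cong1)
  fix \<pi>s
  show "(\<pi>s \<noteq> [] \<and> hd \<pi>s = p \<and> last \<pi>s = q \<and> successively (\<lambda>a b. (a, b) \<in> path_flip V E star) \<pi>s) \<longleftrightarrow>
    (\<pi>s \<noteq> [] \<and> hd \<pi>s = p \<and> last \<pi>s = q \<and>
     (\<forall>\<pi> \<in> set \<pi>s. vertex_path V E \<pi> \<and> hd \<pi> = hd p \<and> last \<pi> = star) \<and>
     (\<forall>i. Suc i < length \<pi>s \<longrightarrow> differ_at_most_one (\<pi>s ! i) (\<pi>s ! Suc i)))"
    using successively_path_flip_iff[of V E star \<pi>s] assms by (cases "hd \<pi>s = p") simp_all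
qed

lemma path_flip_rtrancl_hd_length:
  "(p, q) \<in> (path_flip V E star)\<^sup>* \<Longrightarrow> hd q = hd p \<and> length q = length p"
  by (induction rule: rtrancl_induct) (auto simp: path_flip_def differ_at_most_one_def)

lemma path_flip_rtrancl_Cons:
  assumes "(p, q) \<in> (path_flip V E star)\<^sup>*" "star_path V E star p" "v \<in> V" "(v, hd p) \<in> E"
  shows "(v # p, v # q) \<in> (path_flip V E star)\<^sup>*"
  using assms(1)
proof (induction rule: rtrancl_induct)
  case (step q r)
  have "hd q = hd p" using path_flip_rtrancl_hd_length[OF step.hyps(1)] by simp
  moreover from step.hyps(2) have "star_path V E star q" "star_path V E star r" "hd q = hd r"
    "differ_at_most_one q r"
    by (simp_all add: path_flip_def)
  ultimately have "(v # q, v # r) \<in> path_flip V E star"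
    using assms(3,4) star_path_nonempty[of V E star q] star_path_nonempty[of V E star r]
    by (simp add: path_flip_def star_path_Cons differ_at_most_one_Cons)
  with step.IH show ?case by (rule rtrancl_into_rtrancl)
qed simp

lemma path_flip_second_vertex:
  assumes "layered_graph V E lvl star" "star_path V E star r" "v \<in> V"
    "(v, x) \<in> E" "(v, x') \<in> E" "(x, hd r) \<in> E" "(x', hd r) \<in> E"
  shows "(v # x # r, v # x' # r) \<in> path_flip V E star"
  using assms star_path_nonempty[OF assms(2)] layered_graphD(4)[OF assms(1) assms(4)]
    layered_graphD(4)[OF assms(1) assms(5)]
  by (simp add: path_flip_def star_path_Cons differ_at_most_one_second)

lemma path_flip_second_vertex_approx:
  assumes "(p, q) \<in> path_flip V E star" "Suc 0 < length p"
  shows "(p ! 1, q ! 1) \<in> (approx_rel E (hd p))\<^sup>*"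
proof -
  from assms(1) have p: "vertex_path V E p" "last p = star" and q: "vertex_path V E q" "last q = star"
    and hd: "hd p = hd q" and diff: "differ_at_most_one p q"
    by (simp_all add: path_flip_def star_path_def)
  from diff obtain k where len: "length q = length p" and k: "\<forall>j < length p. j \<noteq> k \<longrightarrow> p ! j = q ! j"
    by (auto simp: differ_at_most_one_iff)
  consider "k \<noteq> 1" | "length p = 2" | "2 < length p" "k = 1"
    using assms(2) by linarith
  then show ?thesis
  proof cases
    case 1
    with k assms(2) show ?thesis by simp
  next
    case 2
    then have "p \<noteq> []" "q \<noteq> []" using len by auto
    with 2 len have "p ! 1 = last p" "q ! 1 = last q" by (simp_all add: last_conv_nth)
    with p q show ?thesis by simp
  next
    case 3
    have "p \<noteq> []" "q \<noteq> []" using assms(2) len by auto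
    then have "p ! 0 = hd p" "q ! 0 = hd p" using hd by (simp_all add: hd_conv_nth)
    moreover have "(p ! 0, p ! 1) \<in> E" "(p ! 1, p ! 2) \<in> E" "(q ! 0, q ! 1) \<in> E" "(q ! 1, q ! 2) \<in> E"
      using p(1) q(1) 3(1) len unfolding vertex_path_def by (auto simp: numeral_2_eq_2)
    moreover have "p ! 2 = q ! 2" using k 3 by simp
    ultimately have "(p ! 1, q ! 1) \<in> approx_rel E (hd p)"
      unfolding approx_rel_iff by metis
    then show ?thesis by simp
  qed
qed

lemma path_flip_rtrancl_second_vertex_approx:
  assumes "(p, q) \<in> (path_flip V E star)\<^sup>*" "Suc 0 < length p"
  shows "(p ! 1, q ! 1) \<in> (approx_rel E (hd p))\<^sup>*"
  using assms(1)
proof (induction rule: rtrancl_induct)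
  case (step q r)
  have "hd q = hd p" "Suc 0 < length q"
    using path_flip_rtrancl_hd_length[OF step.hyps(1)] assms(2) by simp_all
  with path_flip_second_vertex_approx[OF step.hyps(2)] have "(q ! 1, r ! 1) \<in> (approx_rel E (hd p))\<^sup>*"
    by simp
  with step.IH show ?case by (rule rtrancl_trans)
qed simp

lemma path_flip_rtrancl_Cons_along_approx:
  assumes lg: "layered_graph V E lvl star" and "v \<in> V"
    and below: "\<And>w p q. (v, w) \<in> E \<Longrightarrow> star_path V E star p \<Longrightarrow> star_path V E star q \<Longrightarrow>
      hd p = w \<Longrightarrow> hd q = w \<Longrightarrow> (p, q) \<in> (path_flip V E star)\<^sup>*"
    and p: "star_path V E star p" "(v, hd p) \<in> E"
    and "(hd p, x) \<in> (approx_rel E v)\<^sup>*" "star_path V E star r" "hd r = x"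
  shows "(v # p, v # r) \<in> (path_flip V E star)\<^sup>*"
  using assms(6-8)
proof (induction arbitrary: r rule: rtrancl_induct)
  case base
  with p(1) have "(p, r) \<in> (path_flip V E star)\<^sup>*" by (intro below[OF p(2)]) simp_all
  from path_flip_rtrancl_Cons[OF this p(1) \<open>v \<in> V\<close> p(2)] show ?case .
next
  case (step x x2)
  then obtain y where e: "(v, x) \<in> E" "(v, x2) \<in> E" "(x, y) \<in> E" "(x2, y) \<in> E"
    by (auto simp: approx_rel_iff)
  have "y \<in> V" using layered_graphD(4)[OF lg e(3)] by simp
  then obtain r0 where r0: "star_path V E star r0" "hd r0 = y" by (rule star_path_exists[OF lg])
  have x_r0: "star_path V E star (x # r0)" and x2_r0: "star_path V E star (x2 # r0)"
    using r0 e star_path_nonempty[OF r0(1)] layered_graphD(4)[OF lg e(3)]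
      layered_graphD(4)[OF lg e(4)] by (simp_all add: star_path_Cons)
  have init: "(v # p, v # x # r0) \<in> (path_flip V E star)\<^sup>*" using step.IH x_r0 by simp
  have flip: "(v # x # r0, v # x2 # r0) \<in> path_flip V E star"
    using path_flip_second_vertex[OF lg r0(1) \<open>v \<in> V\<close> e(1,2)] e(3,4) r0(2) by simp
  have "(x2 # r0, r) \<in> (path_flip V E star)\<^sup>*"
    using below[OF e(2) x2_r0 step.prems(1)] step.prems(2) by simp
  moreover have "(v, hd (x2 # r0)) \<in> E" using e(2) by simp
  ultimately have tail: "(v # x2 # r0, v # r) \<in> (path_flip V E star)\<^sup>*"
    by (rule path_flip_rtrancl_Cons[OF _ x2_r0 \<open>v \<in> V\<close>])
  show ?case using rtrancl_trans[OF rtrancl_into_rtrancl[OF init flip] tail] .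
qed

lemma path_flip_connected_step:
  assumes lg: "layered_graph V E lvl star" and "v \<in> V"
    and succs: "\<And>x x'. (v, x) \<in> E \<Longrightarrow> (v, x') \<in> E \<Longrightarrow> (x, x') \<in> (approx_rel E v)\<^sup>*"
    and below: "\<And>w p q. (v, w) \<in> E \<Longrightarrow> star_path V E star p \<Longrightarrow> star_path V E star q \<Longrightarrow>
      hd p = w \<Longrightarrow> hd q = w \<Longrightarrow> (p, q) \<in> (path_flip V E star)\<^sup>*"
    and p: "star_path V E star p" "hd p = v" and q: "star_path V E star q" "hd q = v"
  shows "(p, q) \<in> (path_flip V E star)\<^sup>*"
proof -
  have "p \<noteq> []" "q \<noteq> []" using star_path_nonempty[OF p(1)] star_path_nonempty[OF q(1)] .
  have len: "length q = length p"
    using star_path_length[OF lg p(1)] star_path_length[OF lg q(1)] p(2) q(2) by simp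
  show ?thesis
  proof (cases "length p = 1")
    case True
    with p(2) have "p = [v]" by (cases p) auto
    moreover from True len q(2) have "q = [v]" by (cases q) auto
    ultimately show ?thesis by simp
  next
    case False
    define p' q' where "p' = tl p" and "q' = tl q"
    have pq: "p = v # p'" "q = v # q'"
      using \<open>p \<noteq> []\<close> \<open>q \<noteq> []\<close> p(2) q(2) unfolding p'_def q'_def by (metis list.collapse)+
    have "p' \<noteq> []" "q' \<noteq> []" using pq False len by auto
    with p q pq have p': "star_path V E star p'" "(v, hd p') \<in> E"
      and q': "star_path V E star q'" "(v, hd q') \<in> E"
      by (simp_all add: star_path_Cons)
    from path_flip_rtrancl_Cons_along_approx[OF lg \<open>v \<in> V\<close> below p' succs[OF p'(2) q'(2)] q'(1) refl]
    show ?thesis using pq by simp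
  qed
qed

lemma succs_connected_imp_path_flip_connected:
  assumes lg: "layered_graph V E lvl star" and "succs_connected E"
    and "star_path V E star p" "star_path V E star q" "hd p = hd q"
  shows "(p, q) \<in> (path_flip V E star)\<^sup>*"
proof -
  have "(p, q) \<in> (path_flip V E star)\<^sup>*"
    if "v \<in> V" "lvl v = n" "star_path V E star p" "hd p = v" "star_path V E star q" "hd q = v"
    for v n p q
    using that
  proof (induction n arbitrary: v p q rule: less_induct)
    case (less n)
    have succs: "(x, x') \<in> (approx_rel E v)\<^sup>*" if "(v, x) \<in> E" "(v, x') \<in> E" for x x'
      using \<open>succs_connected E\<close> that unfolding succs_connected_def by blast
    have below: "(p, q) \<in> (path_flip V E star)\<^sup>*"
      if "(v, w) \<in> E" "star_path V E star p" "star_path V E star q" "hd p = w" "hd q = w" for w p q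
    proof -
      have "w \<in> V" "lvl w < n"
        using layered_graphD(3,4)[OF lg \<open>(v, w) \<in> E\<close>] less.prems(2) by auto
      from less.IH[OF \<open>lvl w < n\<close> \<open>w \<in> V\<close> refl] that(2-5) show ?thesis by simp
    qed
    from succs below less.prems(3-6) show ?case
      by (rule path_flip_connected_step[OF lg less.prems(1)])
  qed
  with assms(3-5) star_path_hd_in[OF assms(3)] show ?thesis by simp
qed

lemma path_flip_connected_imp_succs_connected:
  assumes lg: "layered_graph V E lvl star"
    and conn: "\<And>p q. star_path V E star p \<Longrightarrow> star_path V E star q \<Longrightarrow> hd p = hd q \<Longrightarrow>
      (p, q) \<in> (path_flip V E star)\<^sup>*"
  shows "succs_connected E"
  unfolding succs_connected_def
proof (intro allI impI)
  fix v x x' assume x: "(v, x) \<in> E" and x': "(v, x') \<in> E"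
  have "v \<in> V" "x \<in> V" "x' \<in> V"
    using layered_graphD(4)[OF lg x] layered_graphD(4)[OF lg x'] by simp_all
  obtain r where r: "star_path V E star r" "hd r = x"
    by (rule star_path_exists[OF lg \<open>x \<in> V\<close>])
  obtain r' where r': "star_path V E star r'" "hd r' = x'"
    by (rule star_path_exists[OF lg \<open>x' \<in> V\<close>])
  have "r \<noteq> []" "r' \<noteq> []" using star_path_nonempty[OF r(1)] star_path_nonempty[OF r'(1)] .
  with r r' x x' \<open>v \<in> V\<close> have "star_path V E star (v # r)" "star_path V E star (v # r')"
    by (simp_all add: star_path_Cons)
  then have "(v # r, v # r') \<in> (path_flip V E star)\<^sup>*" by (rule conn) simp
  from path_flip_rtrancl_second_vertex_approx[OF this] \<open>r \<noteq> []\<close>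
  have "(r ! 0, r' ! 0) \<in> (approx_rel E v)\<^sup>*" by simp
  with r(2) r'(2) \<open>r \<noteq> []\<close> \<open>r' \<noteq> []\<close> show "(x, x') \<in> (approx_rel E v)\<^sup>*"
    by (simp add: hd_conv_nth)
qed

lemma succs_connected_iff_flip_chains:
  assumes lg: "layered_graph V E lvl star"
  shows "succs_connected E \<longleftrightarrow>
    (\<forall>p q. vertex_path V E p \<and> vertex_path V E q \<and> length p = length q \<and>
       hd p = hd q \<and> last p = star \<and> last q = star \<longrightarrow>
     (\<exists>\<pi>s. \<pi>s \<noteq> [] \<and> hd \<pi>s = p \<and> last \<pi>s = q \<and>
        (\<forall>\<pi> \<in> set \<pi>s. vertex_path V E \<pi> \<and> hd \<pi> = hd p \<and> last \<pi> = star) \<and>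
        (\<forall>i. Suc i < length \<pi>s \<longrightarrow> differ_at_most_one (\<pi>s ! i) (\<pi>s ! Suc i))))"
  (is "_ \<longleftrightarrow> (\<forall>p q. ?paths p q \<longrightarrow> ?chain p q)")
proof
  assume "succs_connected E"
  show "\<forall>p q. ?paths p q \<longrightarrow> ?chain p q"
  proof (intro allI impI)
    fix p q assume "?paths p q"
    then have p: "star_path V E star p" and q: "star_path V E star q" and "hd p = hd q"
      by (simp_all add: star_path_def)
    with succs_connected_imp_path_flip_connected[OF lg \<open>succs_connected E\<close>]
    have "(p, q) \<in> (path_flip V E star)\<^sup>*" by blast
    then show "?chain p q" by (rule iffD1[OF path_flip_rtrancl_iff_chain[OF p]])
  qed
next
  assume chains: "\<forall>p q. ?paths p q \<longrightarrow> ?chain p q"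
  show "succs_connected E"
  proof (rule path_flip_connected_imp_succs_connected[OF lg])
    fix p q assume p: "star_path V E star p" and q: "star_path V E star q" and "hd p = hd q"
    then have "length p = length q" using star_path_length[OF lg] by metis
    with p q \<open>hd p = hd q\<close> chains have "?chain p q" by (simp add: star_path_def)
    then show "(p, q) \<in> (path_flip V E star)\<^sup>*" by (rule iffD2[OF path_flip_rtrancl_iff_chain[OF p]])
  qed
qed

theorem mainTheorem5:
  assumes "layered_graph V E lvl star"
  shows "(uniform V E lvl
      \<longleftrightarrow> (\<forall>v x x'. (v, x) \<in> E \<and> (v, x') \<in> E \<longrightarrow>
             (\<exists>(s::nat) (xs::nat \<Rightarrow> 'a) (ys::nat \<Rightarrow> 'a).
                xs 0 = x \<and> xs s = x' \<and> (\<forall>i \<le> s. (v, xs i) \<in> E) \<and>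
                (\<forall>i \<in> {1..s}. (xs (i - 1), ys i) \<in> E \<and> (xs i, ys i) \<in> E))))
    \<and> (uniform V E lvl
      \<longleftrightarrow> (\<forall>p q. vertex_path V E p \<and> vertex_path V E q \<and> length p = length q \<and>
               hd p = hd q \<and> last p = star \<and> last q = star \<longrightarrow>
             (\<exists>\<pi>s. \<pi>s \<noteq> [] \<and> hd \<pi>s = p \<and> last \<pi>s = q \<and>
                (\<forall>\<pi> \<in> set \<pi>s. vertex_path V E \<pi> \<and> hd \<pi> = hd p \<and> last \<pi> = star) \<and>
                (\<forall>i. Suc i < length \<pi>s \<longrightarrow> differ_at_most_one (\<pi>s ! i) (\<pi>s ! Suc i)))))"
proof -
  have uniform: "uniform V E lvl \<longleftrightarrow> succs_connected E"
    by (rule uniform_iff_succs_connected[OF assms])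
  show ?thesis
    using trans[OF uniform succs_connected_iff_zigzag]
      trans[OF uniform succs_connected_iff_flip_chains[OF assms]]
    by (rule conjI)
qed

end
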